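(* Let $F=\mathbb R(a,b)$ be the rational function field in two variables, $D=\left(\frac{a,b}{F}\right)$ the quaternion division algebra (generators $i,j$, $i^2=a$, $j^2=b$, $ij=-ji$) with the involution $\ast$ determined by $i^\ast=i$, $j^\ast=j$, and $K=F(i)$. Let $\lambda\colon D\to M_2(K)$ be the left regular representation with respect to the right $K$-basis $1,j$, and $X^\#=A^{-1}X^\ast A$ on $M_2(K)$ with $A=\mathrm{diag}(1,b)$ and $X^\ast$ the transpose with $\ast$ applied entrywise. Then there exist two distinct unital hermitian cones $M_1\ni j$ and $M_2\ni -j$ on $(D,\ast)$ with $M_1\cap K=M_2\cap K$; moreover no unital hermitian cone on $(M_2(K),\#)$ contains $\lambda(j)$ or $-\lambda(j)$, so for neither $k=1,2$ is there a unital hermitian cone $L$ on $(M_2(K),\#)$ with $M_k\subseteq\lambda^{-1}(L)$.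
   Context: A unital hermitian cone on a ring $R$ with involution $\ast$ is a subset $M\subseteq\{r:r^\ast=r\}$ with $1\in M$, $M+M\subseteq M$, $aMa^\ast\subseteq M$ for all $a\in R$, and $M\cap-M=\{0\}$. The left regular representation is defined by $de_\tau=\sum_\sigma e_\sigma\lambda(d)_{\sigma\tau}$ for $(e_1,e_2)=(1,j)$. *)

theory Defs
  imports "HOL-Analysis.Analysis" "HOL-Computational_Algebra.Fraction_Field"
    "HOL-Computational_Algebra.Polynomial"
begin

definition unital_hermitian_cone ::
  "'r set \<Rightarrow> ('r \<Rightarrow> 'r \<Rightarrow> 'r) \<Rightarrow> ('r \<Rightarrow> 'r \<Rightarrow> 'r) \<Rightarrow> ('r \<Rightarrow> 'r) \<Rightarrow>
   'r \<Rightarrow> 'r \<Rightarrow> ('r \<Rightarrow> 'r) \<Rightarrow> 'r set \<Rightarrow> bool" where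
  "unital_hermitian_cone R add mul star one zero neg M \<longleftrightarrow>
     M \<subseteq> {r \<in> R. star r = r} \<and>
     one \<in> M \<and>
     (\<forall>x\<in>M. \<forall>y\<in>M. add x y \<in> M) \<and>
     (\<forall>a\<in>R. \<forall>x\<in>M. mul (mul a x) (star a) \<in> M) \<and>
     M \<inter> neg ` M = {zero}"

text \<open>R(a,b) = (R(a))(b), realised as fractions of polynomials in b over the field
  of fractions of polynomials in a over the reals.\<close>

type_synonym F = "real poly fract poly fract"

definition va :: F where "va = Fract [: Fract [:0, 1:] 1 :] 1"
definition vb :: F where "vb = Fract [:0, 1:] 1"

datatype quat = Quat (q0: F) (q1: F) (q2: F) (q3: F)
  \<comment> \<open>Quat x0 x1 x2 x3 = x0 + x1 i + x2 j + x3 ij\<close>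

instantiation quat :: ring_1
begin
definition "0 = Quat 0 0 0 0"
definition "1 = Quat 1 0 0 0"
definition "x + y = Quat (q0 x + q0 y) (q1 x + q1 y) (q2 x + q2 y) (q3 x + q3 y)"
definition "- x = Quat (- q0 x) (- q1 x) (- q2 x) (- q3 x)"
definition "x - y = Quat (q0 x - q0 y) (q1 x - q1 y) (q2 x - q2 y) (q3 x - q3 y)"
definition "x * y = Quat
   (q0 x * q0 y + va * q1 x * q1 y + vb * q2 x * q2 y - va * vb * q3 x * q3 y)
   (q0 x * q1 y + q1 x * q0 y - vb * q2 x * q3 y + vb * q3 x * q2 y)
   (q0 x * q2 y + q2 x * q0 y + va * q1 x * q3 y - va * q3 x * q1 y)
   (q0 x * q3 y + q3 x * q0 y + q1 x * q2 y - q2 x * q1 y)"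
instance
  by standard (simp_all add: zero_quat_def one_quat_def plus_quat_def uminus_quat_def
      minus_quat_def times_quat_def algebra_simps)
end

definition qi :: quat where "qi = Quat 0 1 0 0"
definition qj :: quat where "qj = Quat 0 0 1 0"

text \<open>The involution determined by i* = i, j* = j (hence (ij)* = ji = -ij, F fixed).\<close>
definition qstar :: "quat \<Rightarrow> quat" where
  "qstar x = Quat (q0 x) (q1 x) (q2 x) (- q3 x)"

definition ofF :: "F \<Rightarrow> quat" where "ofF c = Quat c 0 0 0"
definition Kset :: "quat set" where "Kset = {x. q2 x = 0 \<and> q3 x = 0}"

definition M2K :: "(quat ^ 2 ^ 2) set" where
  "M2K = {X. \<forall>s t. X $ s $ t \<in> Kset}"

definition mstar :: "quat ^ 2 ^ 2 \<Rightarrow> quat ^ 2 ^ 2" where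
  "mstar X = (\<chi> s t. qstar (X $ t $ s))"

definition Amat :: "quat ^ 2 ^ 2" where
  "Amat = (\<chi> s t. if s = t then (if s = 1 then 1 else ofF vb) else 0)"

definition msharp :: "quat ^ 2 ^ 2 \<Rightarrow> quat ^ 2 ^ 2" where
  "msharp X = matrix_inv Amat ** mstar X ** Amat"

definition ebas :: "2 \<Rightarrow> quat" where
  "ebas s = (if s = 1 then 1 else qj)"

definition lreg :: "quat \<Rightarrow> quat ^ 2 ^ 2" where
  "lreg d = (THE X. X \<in> M2K \<and> (\<forall>t. d * ebas t = (\<Sum>s\<in>UNIV. ebas s * X $ s $ t)))"

abbreviation uhc_D :: "quat set \<Rightarrow> bool" where
  "uhc_D M \<equiv> unital_hermitian_cone UNIV (+) (*) qstar 1 0 uminus M"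

abbreviation uhc_M2K :: "(quat ^ 2 ^ 2) set \<Rightarrow> bool" where
  "uhc_M2K L \<equiv> unital_hermitian_cone M2K (+) (**) msharp (mat 1) 0 uminus L"

end

theory Submission
  imports Defs
begin

text \<open>
  We construct two unital hermitian cones herm_cone 1 and herm_cone (-1) on the quaternion
  algebra D = (a, b / F), F = R(a)(b), from a valuation.  Expanding at infinity, first in b
  and then in a, every nonzero f in F has a leading monomial c b^m a^n with real c, which
  gives a lexicographically ordered degree (m, n) and a leading coefficient c.  Since
  i^2 = a and j^2 = b, the basis 1, i, j, ij of D gets (doubled) degrees of four different
  parity classes, so every nonzero quaternion has a unique leading term, and leading terms
  are multiplicative up to explicit signs.  A symmetric quaternion belongs to herm_cone s
  when its leading coefficient has a prescribed sign depending on its leading degree and,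
  for leading terms of type j, on s; sums and congruences x \<mapsto> d x d* preserve this sign
  condition.  Then j lies in herm_cone 1, -j in herm_cone (-1), and the two cones agree
  on K = F(i).
\<close>

section \<open>Leading terms in a rational function field\<close>

lemma fract_deg_respects:
  fixes p q r s :: "'a::field poly"
  assumes "q \<noteq> 0" "s \<noteq> 0" "p * s = r * q"
  shows "(if p = 0 then 0 else int (degree p) - int (degree q)) =
         (if r = 0 then 0 else int (degree r) - int (degree s))"
proof (cases "p = 0")
  case False
  then have "r \<noteq> 0" using assms by auto
  have "degree (p * s) = degree (r * q)" using assms by simp
  then have "degree p + degree s = degree r + degree q"
    using assms False \<open>r \<noteq> 0\<close> by (metis degree_mult_eq)
  then show ?thesis using False \<open>r \<noteq> 0\<close> by simp
qed (use assms in auto)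

lemma fract_lead_respects:
  fixes p q r s :: "'a::field poly"
  assumes "q \<noteq> 0" "s \<noteq> 0" "p * s = r * q"
  shows "lead_coeff p / lead_coeff q = lead_coeff r / lead_coeff s"
proof -
  have "lead_coeff p * lead_coeff s = lead_coeff r * lead_coeff q"
    using assms by (metis lead_coeff_mult)
  then show ?thesis using assms by (simp add: field_simps)
qed

lift_definition fract_deg :: "'a::field poly fract \<Rightarrow> int" is
  "\<lambda>(p, q). if p = 0 then 0 else int (degree p) - int (degree q)"
  unfolding rel_fun_def by (clarify, rule fract_deg_respects, auto)

lift_definition fract_lead :: "'a::field poly fract \<Rightarrow> 'a" is
  "\<lambda>(p, q). lead_coeff p / lead_coeff q"
  unfolding rel_fun_def by (clarify, rule fract_lead_respects, auto)

lemma fract_deg_Fract: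
  "q \<noteq> 0 \<Longrightarrow> fract_deg (Fract p q) = (if p = 0 then 0 else int (degree p) - int (degree q))"
  by (simp add: Fract.abs_eq fract_deg.abs_eq)

lemma fract_lead_Fract: "q \<noteq> 0 \<Longrightarrow> fract_lead (Fract p q) = lead_coeff p / lead_coeff q"
  by (simp add: Fract.abs_eq fract_lead.abs_eq)

lemma Fract_eq_0_iff: "q \<noteq> 0 \<Longrightarrow> Fract p q = 0 \<longleftrightarrow> p = 0"
  by (simp add: Zero_fract_def eq_fract)

text \<open>Two fractions can be put over a common denominator; this reduces the behaviour of
  degree and leading coefficient under addition to the polynomial case.\<close>

lemma fract_common_denominator:
  fixes f g :: "'a::idom fract"
  obtains P Q d where "d \<noteq> 0" "f = Fract P d" "g = Fract Q d" "f + g = Fract (P + Q) d"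
proof -
  obtain p q where f: "f = Fract p q" "q \<noteq> 0" by (cases f)
  obtain r s where g: "g = Fract r s" "s \<noteq> 0" by (cases g)
  show ?thesis
  proof (rule that[of "q * s" "p * s" "r * q"])
    show "f + g = Fract (p * s + r * q) (q * s)" using f g by (simp add: eq_fract algebra_simps)
  qed (use f g in \<open>simp_all add: eq_fract\<close>)
qed

lemma poly_add_same_degree:
  fixes P Q :: "'a::field poly"
  assumes "degree P = degree Q" "lead_coeff P + lead_coeff Q \<noteq> 0"
  shows "degree (P + Q) = degree P \<and> lead_coeff (P + Q) = lead_coeff P + lead_coeff Q"
proof -
  have "degree P \<le> degree (P + Q)" using assms by (intro le_degree) simp
  moreover have "degree (P + Q) \<le> degree P" using degree_add_le_max[of P Q] assms by simp
  ultimately show ?thesis using assms by simp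
qed

lemma poly_add_cancel_degree:
  fixes P Q :: "'a::field poly"
  assumes "degree P = degree Q" "lead_coeff P + lead_coeff Q = 0" "P + Q \<noteq> 0"
  shows "degree (P + Q) < degree P"
proof -
  have "degree (P + Q) \<le> degree P" using degree_add_le_max[of P Q] assms by simp
  moreover have "coeff (P + Q) (degree P) = 0" using assms by simp
  then have "degree (P + Q) \<noteq> degree P" using assms(3) leading_coeff_0_iff by metis
  ultimately show ?thesis by simp
qed

lemma fract_lead_nonzero: "(f::'a::field poly fract) \<noteq> 0 \<Longrightarrow> fract_lead f \<noteq> 0"
  by (cases f) (auto simp: fract_lead_Fract Fract_eq_0_iff)

lemma fract_deg_mult:
  "(f::'a::field poly fract) \<noteq> 0 \<Longrightarrow> g \<noteq> 0 \<Longrightarrow> fract_deg (f * g) = fract_deg f + fract_deg g"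
  by (cases f; cases g) (auto simp: fract_deg_Fract Fract_eq_0_iff degree_mult_eq)

lemma fract_lead_mult: "fract_lead ((f::'a::field poly fract) * g) = fract_lead f * fract_lead g"
  by (cases f; cases g) (auto simp: fract_lead_Fract lead_coeff_mult)

lemma fract_deg_lead_uminus [simp]:
  "fract_deg (- (f::'a::field poly fract)) = fract_deg f" "fract_lead (- f) = - fract_lead f"
  by (cases f; simp add: fract_lead_Fract fract_deg_Fract lead_coeff_minus)+

lemma fract_add_dominant:
  fixes f g :: "'a::field poly fract"
  assumes "f \<noteq> 0" "g = 0 \<or> fract_deg g < fract_deg f"
  shows "f + g \<noteq> 0 \<and> fract_deg (f + g) = fract_deg f \<and> fract_lead (f + g) = fract_lead f"
proof (cases "g = 0")
  case False
  obtain P Q d where e: "d \<noteq> 0" "f = Fract P d" "g = Fract Q d" "f + g = Fract (P + Q) d"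
    by (rule fract_common_denominator)
  have PQ: "P \<noteq> 0" "Q \<noteq> 0" using e assms False by (auto simp: Fract_eq_0_iff)
  then have "degree Q < degree P" using assms False e by (simp add: fract_deg_Fract)
  then have "degree (P + Q) = degree P" "lead_coeff (P + Q) = lead_coeff P"
    by (metis add.commute degree_add_eq_left lead_coeff_add_le)+
  moreover from this PQ(1) have "P + Q \<noteq> 0" by (metis leading_coeff_0_iff)
  ultimately show ?thesis using e PQ
    by (simp del: add_fract add: Fract_eq_0_iff fract_deg_Fract fract_lead_Fract)
qed (use assms in simp)

lemma fract_add_same_deg:
  fixes f g :: "'a::field poly fract"
  assumes "f \<noteq> 0" "g \<noteq> 0" "fract_deg f = fract_deg g" "fract_lead f + fract_lead g \<noteq> 0"
  shows "f + g \<noteq> 0 \<and> fract_deg (f + g) = fract_deg f \<and>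
         fract_lead (f + g) = fract_lead f + fract_lead g"
proof -
  obtain P Q d where e: "d \<noteq> 0" "f = Fract P d" "g = Fract Q d" "f + g = Fract (P + Q) d"
    by (rule fract_common_denominator)
  have PQ: "P \<noteq> 0" "Q \<noteq> 0" using e assms by (auto simp: Fract_eq_0_iff)
  have deg: "degree P = degree Q" using assms PQ e by (simp add: fract_deg_Fract)
  moreover have lc: "lead_coeff P + lead_coeff Q \<noteq> 0" using assms e
    by (simp add: fract_lead_Fract add_divide_distrib[symmetric])
  ultimately have "degree (P + Q) = degree P \<and> lead_coeff (P + Q) = lead_coeff P + lead_coeff Q"
    by (rule poly_add_same_degree)
  moreover from this lc have "P + Q \<noteq> 0" by (metis leading_coeff_0_iff)
  ultimately show ?thesis using e PQ deg
    by (simp del: add_fract add: Fract_eq_0_iff fract_deg_Fract fract_lead_Fract add_divide_distrib)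
qed

lemma fract_add_cancel:
  fixes f g :: "'a::field poly fract"
  assumes "f \<noteq> 0" "g \<noteq> 0" "fract_deg f = fract_deg g" "fract_lead f + fract_lead g = 0"
    and "f + g \<noteq> 0"
  shows "fract_deg (f + g) < fract_deg f"
proof -
  obtain P Q d where e: "d \<noteq> 0" "f = Fract P d" "g = Fract Q d" "f + g = Fract (P + Q) d"
    by (rule fract_common_denominator)
  have PQ: "P \<noteq> 0" "Q \<noteq> 0" "P + Q \<noteq> 0"
    using e assms by (auto simp del: add_fract simp: Fract_eq_0_iff)
  have "degree P = degree Q" using assms PQ e by (simp add: fract_deg_Fract)
  moreover have "lead_coeff P + lead_coeff Q = 0" using assms e
    by (simp add: fract_lead_Fract add_divide_distrib[symmetric])
  ultimately have "degree (P + Q) < degree P" using PQ(3) by (rule poly_add_cancel_degree)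
  then show ?thesis using e PQ by (simp del: add_fract add: fract_deg_Fract)
qed

section \<open>A lexicographic valuation on F = R(a)(b)\<close>

text \<open>Expanding f in F first at b = infinity and then the leading coefficient at
  a = infinity gives f = c b^m a^n + (lower terms) with c real.  The exponent pair (m, n),
  ordered lexicographically, is the valuation degree and c the leading coefficient; the sign
  of c is an ordering of F in which b is infinitely larger than a, and a than every real.\<close>

definition vdeg :: "F \<Rightarrow> int \<times> int" where
  "vdeg f = (fract_deg f, fract_deg (fract_lead f))"

definition vlc :: "F \<Rightarrow> real" where
  "vlc f = fract_lead (fract_lead f)"

definition lex_less :: "int \<times> int \<Rightarrow> int \<times> int \<Rightarrow> bool" where
  "lex_less x y \<longleftrightarrow> fst x < fst y \<or> (fst x = fst y \<and> snd x < snd y)"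

definition lex_le :: "int \<times> int \<Rightarrow> int \<times> int \<Rightarrow> bool" where
  "lex_le x y \<longleftrightarrow> lex_less x y \<or> x = y"

lemma lex_less_irrefl [simp]: "\<not> lex_less x x"
  unfolding lex_less_def by auto

lemma lex_less_asym: "lex_less x y \<Longrightarrow> \<not> lex_less y x"
  unfolding lex_less_def by auto

lemma lex_less_trans: "lex_less x y \<Longrightarrow> lex_less y z \<Longrightarrow> lex_less x z"
  unfolding lex_less_def by auto

lemma lex_le_less_trans: "lex_le x y \<Longrightarrow> lex_less y z \<Longrightarrow> lex_less x z"
  unfolding lex_less_def lex_le_def by auto

lemma lex_trichotomy: "lex_less x y \<or> x = y \<or> lex_less y x"
  unfolding lex_less_def by (cases x; cases y) auto

lemma lex_less_add:
  "lex_less a b \<Longrightarrow> lex_le c d \<Longrightarrow> lex_less (a + c) (b + d)"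
  "lex_le a b \<Longrightarrow> lex_less c d \<Longrightarrow> lex_less (a + c) (b + d)"
  unfolding lex_less_def lex_le_def by (cases a; cases b; cases c; cases d; auto)+

lemma vlc_nonzero: "f \<noteq> 0 \<Longrightarrow> vlc f \<noteq> 0"
  unfolding vlc_def by (intro fract_lead_nonzero)

lemma vlc_0 [simp]: "vlc 0 = 0"
  by (simp add: vlc_def Zero_fract_def fract_lead_Fract)

lemma vdeg_vlc_uminus [simp]: "vdeg (- f) = vdeg f" "vlc (- f) = - vlc f"
  unfolding vdeg_def vlc_def by simp_all

lemma vdeg_vlc_mult:
  "f \<noteq> 0 \<Longrightarrow> g \<noteq> 0 \<Longrightarrow> vdeg (f * g) = vdeg f + vdeg g \<and> vlc (f * g) = vlc f * vlc g"
  unfolding vdeg_def vlc_def by (simp add: fract_deg_mult fract_lead_mult fract_lead_nonzero)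

lemma vdeg_add_dominant:
  assumes "f \<noteq> 0" "g = 0 \<or> lex_less (vdeg g) (vdeg f)"
  shows "f + g \<noteq> 0 \<and> vdeg (f + g) = vdeg f \<and> vlc (f + g) = vlc f"
proof (cases "g = 0 \<or> fract_deg g < fract_deg f")
  case True
  then show ?thesis using fract_add_dominant[of f g] assms unfolding vdeg_def vlc_def by auto
next
  case False
  then have e: "fract_deg f = fract_deg g" "g \<noteq> 0"
    and lt: "fract_deg (fract_lead g) < fract_deg (fract_lead f)"
    using assms(2) unfolding lex_less_def vdeg_def by auto
  have inner: "fract_lead f + fract_lead g \<noteq> 0 \<and>
      fract_deg (fract_lead f + fract_lead g) = fract_deg (fract_lead f) \<and>
      fract_lead (fract_lead f + fract_lead g) = fract_lead (fract_lead f)"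
    using fract_add_dominant[of "fract_lead f" "fract_lead g"] lt fract_lead_nonzero[OF assms(1)]
    by simp
  then show ?thesis
    using fract_add_same_deg[of f g] e assms(1) unfolding vdeg_def vlc_def by simp
qed

lemma vdeg_add_same:
  assumes "f \<noteq> 0" "g \<noteq> 0" "vdeg f = vdeg g" "vlc f + vlc g \<noteq> 0"
  shows "f + g \<noteq> 0 \<and> vdeg (f + g) = vdeg f \<and> vlc (f + g) = vlc f + vlc g"
proof -
  have e: "fract_deg f = fract_deg g" "fract_deg (fract_lead f) = fract_deg (fract_lead g)"
    using assms(3) unfolding vdeg_def by auto
  have inner: "fract_lead f + fract_lead g \<noteq> 0 \<and>
      fract_deg (fract_lead f + fract_lead g) = fract_deg (fract_lead f) \<and>
      fract_lead (fract_lead f + fract_lead g) = fract_lead (fract_lead f) + fract_lead (fract_lead g)"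
    using fract_add_same_deg[of "fract_lead f" "fract_lead g"] e assms
      fract_lead_nonzero[OF assms(1)] fract_lead_nonzero[OF assms(2)]
    unfolding vlc_def by simp
  then show ?thesis
    using fract_add_same_deg[of f g] e assms unfolding vdeg_def vlc_def by simp
qed

lemma vdeg_add_cancel:
  assumes "f \<noteq> 0" "g \<noteq> 0" "vdeg f = vdeg g" "vlc f + vlc g = 0" "f + g \<noteq> 0"
  shows "lex_less (vdeg (f + g)) (vdeg f)"
proof (cases "fract_lead f + fract_lead g = 0")
  case True
  then have "fract_deg (f + g) < fract_deg f"
    using fract_add_cancel[of f g] assms unfolding vdeg_def by simp
  then show ?thesis unfolding lex_less_def vdeg_def by simp
next
  case False
  have e: "fract_deg f = fract_deg g" "fract_deg (fract_lead f) = fract_deg (fract_lead g)"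
    using assms(3) unfolding vdeg_def by auto
  have outer: "fract_deg (f + g) = fract_deg f \<and> fract_lead (f + g) = fract_lead f + fract_lead g"
    using fract_add_same_deg[of f g] False e assms by simp
  have "fract_deg (fract_lead f + fract_lead g) < fract_deg (fract_lead f)"
    using fract_add_cancel[of "fract_lead f" "fract_lead g"] False e assms
      fract_lead_nonzero[OF assms(1)] fract_lead_nonzero[OF assms(2)]
    unfolding vlc_def by simp
  then show ?thesis using outer unfolding lex_less_def vdeg_def by simp
qed

lemma vdeg_add_le:
  assumes "f \<noteq> 0" "g \<noteq> 0" "f + g \<noteq> 0"
  shows "lex_le (vdeg (f + g)) (vdeg f) \<or> lex_le (vdeg (f + g)) (vdeg g)"
proof -
  consider "lex_less (vdeg g) (vdeg f)" | "vdeg f = vdeg g" | "lex_less (vdeg f) (vdeg g)"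
    using lex_trichotomy by blast
  then show ?thesis
  proof cases
    case 1 then show ?thesis using vdeg_add_dominant[of f g] assms unfolding lex_le_def by simp
  next
    case 3 then show ?thesis
      using vdeg_add_dominant[of g f] assms unfolding lex_le_def by (simp add: add.commute)
  next
    case 2 then show ?thesis
      using vdeg_add_same[of f g] vdeg_add_cancel[of f g] assms unfolding lex_le_def by auto
  qed
qed

lemma F_neg_self: "(f::F) = - f \<Longrightarrow> f = 0"
  using vlc_nonzero[of f] by (metis vdeg_vlc_uminus(2) add.inverse_neutral neg_equal_zero)

lemma vdeg_vlc_generators [simp]:
  "vdeg 1 = (0, 0)" "vlc 1 = 1" "vdeg va = (0, 1)" "vlc va = 1" "vdeg vb = (1, 0)" "vlc vb = 1"
proof -
  have t: "Fract [:0, 1:] (1::real poly) \<noteq> 0" by (simp add: Fract_eq_0_iff)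
  have one: "fract_deg (1::'a::field poly fract) = 0" "fract_lead (1::'a poly fract) = 1"
    by (simp_all add: One_fract_def fract_deg_Fract fract_lead_Fract)
  show "vdeg 1 = (0, 0)" "vlc 1 = 1" "vdeg va = (0, 1)" "vlc va = 1" "vdeg vb = (1, 0)" "vlc vb = 1"
    by (simp_all add: va_def vb_def vdeg_def vlc_def fract_deg_Fract fract_lead_Fract t one)
qed

lemma va_vb_nonzero [simp]: "va \<noteq> 0" "vb \<noteq> 0" "va * vb \<noteq> 0"
  using vdeg_vlc_generators vlc_0 by (metis zero_neq_one mult_eq_0_iff)+

lemma vdeg_vlc_va_vb [simp]: "vdeg (va * vb) = (1, 1)" "vlc (va * vb) = 1"
  using vdeg_vlc_mult[of va vb] by simp_all

section \<open>Leading terms of quaternions\<close>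

text \<open>Write x = x0 + x1 i + x2 j + x3 ij with basis e0 = 1, e1 = i, e2 = j, e3 = ij.
  Since i^2 = a and j^2 = b, the basis element e_k has half-integral degree; doubling all
  degrees, e_k has degree basis_deg k (j contributes (1,0) and i contributes (0,1)), and the
  term x_k e_k has degree term_deg k x_k.  The parity class of a doubled degree determines
  k, so the four terms of x never share a degree and x has a unique leading term.\<close>

definition qcomp :: "quat \<Rightarrow> nat \<Rightarrow> F" where
  "qcomp x k = (if k = 0 then q0 x else if k = 1 then q1 x else if k = 2 then q2 x
     else if k = 3 then q3 x else 0)"

definition basis_deg :: "nat \<Rightarrow> int \<times> int" where
  "basis_deg k = (if k \<ge> 2 then 1 else 0, if odd k then 1 else 0)"

definition term_deg :: "nat \<Rightarrow> F \<Rightarrow> int \<times> int" where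
  "term_deg k f = (2 * fst (vdeg f) + fst (basis_deg k), 2 * snd (vdeg f) + snd (basis_deg k))"

definition deg_type :: "int \<times> int \<Rightarrow> nat" where
  "deg_type d = (if odd (fst d) then 2 else 0) + (if odd (snd d) then 1 else 0)"

text \<open>Multiplication table of the basis: e_k e_l = struct_const k l * e_(prod_index k l),
  where prod_index adds the binary digits of k and l modulo 2.  The structure constant has
  real leading coefficient struct_sign k l = +1 or -1.\<close>

definition prod_index :: "nat \<Rightarrow> nat \<Rightarrow> nat" where
  "prod_index k l = (if (k \<ge> 2) = (l \<ge> 2) then 0 else 2) + (if odd k = odd l then 0 else 1)"

definition struct_const :: "nat \<Rightarrow> nat \<Rightarrow> F" where
  "struct_const k l = (if k = 0 \<or> l = 0 then 1 else
     if k = 1 then (if l = 1 then va else if l = 2 then 1 else va) else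
     if k = 2 then (if l = 1 then -1 else if l = 2 then vb else - vb) else
     (if l = 1 then - va else if l = 2 then vb else - (va * vb)))"

definition struct_sign :: "nat \<Rightarrow> nat \<Rightarrow> real" where
  "struct_sign k l = (if k \<ge> 2 \<and> odd l then -1 else 1)"

lemma less_4_cases: "(k::nat) < 4 \<Longrightarrow> k = 0 \<or> k = 1 \<or> k = 2 \<or> k = 3"
  by auto

lemma qcomp_mult:
  assumes "m < 4"
  shows "qcomp (x * y) m =
    (\<Sum>k<4. struct_const k (prod_index k m) * qcomp x k * qcomp y (prod_index k m))"
proof -
  have sum4: "(\<Sum>k<4. f k) = f 0 + f 1 + f 2 + f (3::nat)" for f :: "nat \<Rightarrow> F"
    by (simp add: eval_nat_numeral)
  from less_4_cases[OF assms] show ?thesis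
    by (elim disjE) (simp_all add: sum4 qcomp_def prod_index_def struct_const_def times_quat_def)
qed

lemma struct_const_props:
  assumes "k < 4" "l < 4"
  shows "struct_const k l \<noteq> 0 \<and> vlc (struct_const k l) = struct_sign k l \<and>
    2 * fst (vdeg (struct_const k l)) + fst (basis_deg (prod_index k l)) =
      fst (basis_deg k) + fst (basis_deg l) \<and>
    2 * snd (vdeg (struct_const k l)) + snd (basis_deg (prod_index k l)) =
      snd (basis_deg k) + snd (basis_deg l)"
  using less_4_cases[OF assms(1)] less_4_cases[OF assms(2)]
  by (elim disjE) (simp_all add: struct_const_def struct_sign_def basis_deg_def prod_index_def)

lemma prod_index_lt: "k < 4 \<Longrightarrow> l < 4 \<Longrightarrow> prod_index k l < 4"
  unfolding prod_index_def by auto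

lemma prod_index_cancel: "k < 4 \<Longrightarrow> m < 4 \<Longrightarrow> prod_index k (prod_index k m) = m"
  by (drule less_4_cases)+ (elim disjE; simp add: prod_index_def)

lemma deg_type_add: "deg_type (D + E) = prod_index (deg_type D) (deg_type E)"
  unfolding deg_type_def prod_index_def by (cases D; cases E) auto

lemma deg_type_term_deg: "k < 4 \<Longrightarrow> deg_type (term_deg k f) = k"
  by (drule less_4_cases) (elim disjE; simp add: deg_type_def term_deg_def basis_deg_def)

lemma deg_type_lt: "deg_type D < 4"
  unfolding deg_type_def by auto

lemma term_deg_less_iff: "lex_less (term_deg m f) (term_deg m g) \<longleftrightarrow> lex_less (vdeg f) (vdeg g)"
  unfolding lex_less_def term_deg_def by auto

lemma term_deg_eq_iff: "term_deg m f = term_deg m g \<longleftrightarrow> vdeg f = vdeg g"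
  unfolding term_deg_def by (cases "vdeg f"; cases "vdeg g") auto

definition term_below :: "nat \<Rightarrow> int \<times> int \<Rightarrow> F \<Rightarrow> bool" where
  "term_below m D f \<longleftrightarrow> f = 0 \<or> lex_less (term_deg m f) D"

definition term_leading :: "nat \<Rightarrow> int \<times> int \<Rightarrow> real \<Rightarrow> F \<Rightarrow> bool" where
  "term_leading m D c f \<longleftrightarrow> f \<noteq> 0 \<and> term_deg m f = D \<and> vlc f = c"

lemma term_below_uminus: "term_below k D f \<Longrightarrow> term_below k D (- f)"
  unfolding term_below_def term_deg_def by simp

lemma term_leading_uminus: "term_leading k D c f \<Longrightarrow> term_leading k D (- c) (- f)"
  unfolding term_leading_def term_deg_def by simp

lemma term_leading_coeff_nonzero: "term_leading k D c f \<Longrightarrow> c \<noteq> 0"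
  unfolding term_leading_def using vlc_nonzero by auto

lemma term_below_add:
  assumes f: "term_below m D f" and g: "term_below m D g"
  shows "term_below m D (f + g)"
proof (cases "f = 0 \<or> g = 0 \<or> f + g = 0")
  case False
  then have "lex_le (vdeg (f + g)) (vdeg f) \<or> lex_le (vdeg (f + g)) (vdeg g)"
    using vdeg_add_le by auto
  then have "lex_le (term_deg m (f + g)) (term_deg m f) \<or> lex_le (term_deg m (f + g)) (term_deg m g)"
    unfolding lex_le_def using term_deg_less_iff term_deg_eq_iff by auto
  moreover have "lex_less (term_deg m f) D" "lex_less (term_deg m g) D"
    using f g False unfolding term_below_def by auto
  ultimately have "lex_less (term_deg m (f + g)) D" using lex_le_less_trans by blast
  then show ?thesis unfolding term_below_def by simp
qed (use assms in \<open>auto simp: term_below_def\<close>)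

lemma term_leading_add:
  assumes "term_leading m D c f" "term_below m D g"
  shows "term_leading m D c (f + g)"
proof -
  have "g = 0 \<or> lex_less (vdeg g) (vdeg f)"
    using assms unfolding term_leading_def term_below_def using term_deg_less_iff by metis
  then have "f + g \<noteq> 0 \<and> vdeg (f + g) = vdeg f \<and> vlc (f + g) = vlc f"
    using vdeg_add_dominant assms(1) unfolding term_leading_def by blast
  then show ?thesis using assms(1) term_deg_eq_iff unfolding term_leading_def by metis
qed

lemma term_below_sum:
  "finite S \<Longrightarrow> (\<forall>k\<in>S. term_below m D (T k)) \<Longrightarrow> term_below m D (sum T S)"
  by (induction S rule: finite_induct) (auto simp: term_below_def[of _ _ 0] term_below_add)

lemma term_leading_sum:
  assumes "finite S" "K \<in> S" "term_leading m D c (T K)" "\<forall>k\<in>S - {K}. term_below m D (T k)"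
  shows "term_leading m D c (sum T S)"
proof -
  have "sum T S = T K + sum T (S - {K})" using assms by (simp add: sum.remove)
  moreover have "term_below m D (sum T (S - {K}))" using assms by (intro term_below_sum) auto
  ultimately show ?thesis using term_leading_add assms by simp
qed

lemma product_term_leading:
  assumes "k < 4" "l < 4" "f \<noteq> 0" "g \<noteq> 0"
  shows "term_leading (prod_index k l) (term_deg k f + term_deg l g)
           (struct_sign k l * vlc f * vlc g) (struct_const k l * f * g)"
proof -
  note S = struct_const_props[OF assms(1,2)]
  have nz: "struct_const k l * f \<noteq> 0" using S assms by simp
  have "vdeg (struct_const k l * f) = vdeg (struct_const k l) + vdeg f \<and>
      vlc (struct_const k l * f) = vlc (struct_const k l) * vlc f"
    using vdeg_vlc_mult S assms by blast
  moreover have "vdeg (struct_const k l * f * g) = vdeg (struct_const k l * f) + vdeg g \<and>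
      vlc (struct_const k l * f * g) = vlc (struct_const k l * f) * vlc g"
    using vdeg_vlc_mult nz assms by blast
  ultimately show ?thesis
    using S nz assms unfolding term_leading_def term_deg_def by (auto simp: algebra_simps)
qed

lemma product_term_below:
  assumes "k < 4" "l < 4"
    and f: "f = 0 \<or> lex_le (term_deg k f) D" and g: "g = 0 \<or> lex_le (term_deg l g) E"
    and strict: "term_below k D f \<or> term_below l E g"
  shows "term_below (prod_index k l) (D + E) (struct_const k l * f * g)"
proof (cases "f = 0 \<or> g = 0")
  case False
  moreover have "lex_less (term_deg k f) D \<or> lex_less (term_deg l g) E"
    using strict False unfolding term_below_def by blast
  ultimately have "lex_less (term_deg k f + term_deg l g) (D + E)"
    using f g lex_less_add by blast
  then show ?thesis
    using product_term_leading[OF assms(1,2)] False unfolding term_below_def term_leading_def by auto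
qed (auto simp: term_below_def)

definition qlead :: "quat \<Rightarrow> int \<times> int \<Rightarrow> real \<Rightarrow> bool" where
  "qlead x D c \<longleftrightarrow> (\<forall>k<4. (k = deg_type D \<longrightarrow> term_leading k D c (qcomp x k)) \<and>
                              (k \<noteq> deg_type D \<longrightarrow> term_below k D (qcomp x k)))"

lemma qlead_le: "qlead x D c \<Longrightarrow> k < 4 \<Longrightarrow> qcomp x k = 0 \<or> lex_le (term_deg k (qcomp x k)) D"
  unfolding qlead_def term_leading_def term_below_def lex_le_def by (cases "k = deg_type D") auto

lemma qlead_below: "qlead x D c \<Longrightarrow> k < 4 \<Longrightarrow> k \<noteq> deg_type D \<Longrightarrow> term_below k D (qcomp x k)"
  unfolding qlead_def by blast

lemma qlead_leading: "qlead x D c \<Longrightarrow> term_leading (deg_type D) D c (qcomp x (deg_type D))"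
  unfolding qlead_def using deg_type_lt by blast

lemma qlead_coeff_nonzero: "qlead x D c \<Longrightarrow> c \<noteq> 0"
  using qlead_leading term_leading_coeff_nonzero by blast

lemma qlead_intro:
  assumes "\<And>k. k < 4 \<Longrightarrow> k = deg_type D \<Longrightarrow> term_leading k D c (qcomp x k)"
    and "\<And>k. k < 4 \<Longrightarrow> k \<noteq> deg_type D \<Longrightarrow> term_below k D (qcomp x k)"
  shows "qlead x D c"
  unfolding qlead_def using assms by blast

lemma qcomp_add: "qcomp (x + y) k = qcomp x k + qcomp y k"
  by (simp add: qcomp_def plus_quat_def)

lemma qcomp_uminus: "qcomp (- x) k = - qcomp x k"
  by (simp add: qcomp_def uminus_quat_def)

lemma qcomp_qstar: "qcomp (qstar x) k = (if k = 3 then - qcomp x k else qcomp x k)"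
  by (simp add: qcomp_def qstar_def)

lemma quat_eq_0_iff_qcomp: "x = 0 \<longleftrightarrow> (\<forall>k<4. qcomp x k = 0)"
proof
  assume "\<forall>k<4. qcomp x k = 0"
  then have "qcomp x 0 = 0" "qcomp x 1 = 0" "qcomp x 2 = 0" "qcomp x 3 = 0" by simp_all
  then show "x = 0" by (cases x) (simp add: qcomp_def zero_quat_def)
qed (simp add: qcomp_def zero_quat_def)

lemma finite_lex_maximal:
  assumes "finite S" "S \<noteq> {}"
  shows "\<exists>K\<in>S. \<forall>k\<in>S. \<not> lex_less (h K) (h k)"
  using assms
proof (induction S rule: finite_ne_induct)
  case (insert k0 F)
  then obtain K where K: "K \<in> F" "\<forall>k\<in>F. \<not> lex_less (h K) (h k)" by blast
  show ?case
  proof (cases "lex_less (h K) (h k0)")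
    case True
    then have "\<forall>k\<in>insert k0 F. \<not> lex_less (h k0) (h k)" using K lex_less_trans lex_less_irrefl by blast
    then show ?thesis by blast
  qed (use K in blast)
qed simp

lemma qlead_exists:
  assumes "x \<noteq> 0" shows "\<exists>D c. qlead x D c"
proof -
  define S where "S = {k. k < 4 \<and> qcomp x k \<noteq> 0}"
  define deg where "deg k = term_deg k (qcomp x k)" for k
  have "finite S" unfolding S_def by simp
  moreover have "S \<noteq> {}" using assms unfolding S_def quat_eq_0_iff_qcomp by auto
  ultimately obtain K where K: "K \<in> S" "\<forall>k\<in>S. \<not> lex_less (deg K) (deg k)"
    using finite_lex_maximal[of S deg] by blast
  have type: "deg_type (deg k) = k" if "k < 4" for k
    unfolding deg_def using that by (rule deg_type_term_deg)
  have type_K: "deg_type (deg K) = K" using K(1) type unfolding S_def by simp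
  have "qlead x (deg K) (vlc (qcomp x K))"
  proof (rule qlead_intro)
    fix k :: nat assume "k < 4" "k = deg_type (deg K)"
    then show "term_leading k (deg K) (vlc (qcomp x K)) (qcomp x k)"
      using type_K K(1) unfolding term_leading_def S_def deg_def by simp
  next
    fix k :: nat assume k: "k < 4" "k \<noteq> deg_type (deg K)"
    show "term_below k (deg K) (qcomp x k)"
    proof (cases "qcomp x k = 0")
      case False
      then have "\<not> lex_less (deg K) (deg k)" using K(2) k(1) unfolding S_def by simp
      moreover have "deg k \<noteq> deg K" using k type[OF k(1)] by auto
      ultimately have "lex_less (deg k) (deg K)" using lex_trichotomy by blast
      then show ?thesis unfolding term_below_def deg_def by simp
    qed (simp add: term_below_def)
  qed
  then show ?thesis by blast
qed

text \<open>The leading term is unique: two candidates of different degree would each have to lie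
  strictly below the other.\<close>

lemma qlead_unique:
  assumes X: "qlead x D c" and Y: "qlead x E e"
  shows "D = E \<and> c = e"
proof -
  note lx = qlead_leading[OF X] and ly = qlead_leading[OF Y]
  have "D = E"
  proof (rule ccontr)
    assume ne: "D \<noteq> E"
    then have "deg_type D \<noteq> deg_type E" using lx ly unfolding term_leading_def by auto
    then have "term_below (deg_type D) E (qcomp x (deg_type D))"
      "term_below (deg_type E) D (qcomp x (deg_type E))"
      using qlead_below[OF Y] qlead_below[OF X] deg_type_lt by auto
    then have "lex_less D E" "lex_less E D" using lx ly unfolding term_below_def term_leading_def by auto
    then show False using lex_less_asym by blast
  qed
  then show ?thesis using lx ly unfolding term_leading_def by auto
qed

lemma qlead_uminus: "qlead x D c \<Longrightarrow> qlead (- x) D (- c)"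
  unfolding qlead_def qcomp_uminus using term_leading_uminus term_below_uminus by blast

text \<open>The involution only changes the sign of the ij-component.\<close>

lemma qlead_qstar:
  assumes X: "qlead x D c"
  shows "qlead (qstar x) D (if deg_type D = 3 then - c else c)"
proof (rule qlead_intro; unfold qcomp_qstar)
  fix k :: nat assume k: "k < 4"
  show "term_leading k D (if deg_type D = 3 then - c else c) (if k = 3 then - qcomp x k else qcomp x k)"
    if "k = deg_type D"
    using qlead_leading[OF X] term_leading_uminus[OF qlead_leading[OF X]] that by auto
  show "term_below k D (if k = 3 then - qcomp x k else qcomp x k)" if "k \<noteq> deg_type D"
    using qlead_below[OF X k that] term_below_uminus[OF qlead_below[OF X k that]] by auto
qed

lemma qlead_add_dominant:
  assumes X: "qlead x D c" and Y: "qlead y E e" and less: "lex_less D E"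
  shows "qlead (x + y) E e"
proof (rule qlead_intro; unfold qcomp_add)
  fix k :: nat assume k: "k < 4"
  have "term_below k E (qcomp x k)"
    using qlead_le[OF X k] less lex_le_less_trans unfolding term_below_def by blast
  then show "term_leading k E e (qcomp x k + qcomp y k)" if "k = deg_type E"
    using term_leading_add[OF qlead_leading[OF Y]] that by (simp add: add.commute)
  show "term_below k E (qcomp x k + qcomp y k)" if "k \<noteq> deg_type E"
    using \<open>term_below k E (qcomp x k)\<close> qlead_below[OF Y k that] term_below_add by blast
qed

lemma qlead_add_same:
  assumes X: "qlead x D c" and Y: "qlead y D e" and ce: "c + e \<noteq> 0"
  shows "qlead (x + y) D (c + e)"
proof (rule qlead_intro; unfold qcomp_add)
  fix k :: nat assume k: "k < 4"
  show "term_leading k D (c + e) (qcomp x k + qcomp y k)" if "k = deg_type D"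
  proof -
    have lx: "term_leading k D c (qcomp x k)" and ly: "term_leading k D e (qcomp y k)"
      using qlead_leading[OF X] qlead_leading[OF Y] that by simp_all
    then have "vdeg (qcomp x k) = vdeg (qcomp y k)"
      unfolding term_leading_def using term_deg_eq_iff by metis
    then have "qcomp x k + qcomp y k \<noteq> 0 \<and> vdeg (qcomp x k + qcomp y k) = vdeg (qcomp x k) \<and>
        vlc (qcomp x k + qcomp y k) = vlc (qcomp x k) + vlc (qcomp y k)"
      using vdeg_add_same lx ly ce unfolding term_leading_def by auto
    then show ?thesis using lx ly term_deg_eq_iff unfolding term_leading_def by metis
  qed
  show "term_below k D (qcomp x k + qcomp y k)" if "k \<noteq> deg_type D"
    using qlead_below[OF X k that] qlead_below[OF Y k that] term_below_add by blast
qed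

text \<open>Multiplicativity.  In the expansion of the m-th component of x y, only the product of
  the two leading terms can reach the degree D + E; every other product lies below it.\<close>

lemma qlead_mult_term_below:
  assumes X: "qlead x D c" and Y: "qlead y E e" and "k < 4" "m < 4"
    and not_leading: "k \<noteq> deg_type D \<or> prod_index k m \<noteq> deg_type E"
  shows "term_below m (D + E)
           (struct_const k (prod_index k m) * qcomp x k * qcomp y (prod_index k m))"
proof -
  have l: "prod_index k m < 4" using prod_index_lt assms by auto
  have "prod_index k (prod_index k m) = m" using prod_index_cancel assms by blast
  moreover have "term_below k D (qcomp x k) \<or> term_below (prod_index k m) E (qcomp y (prod_index k m))"
    using not_leading qlead_below[OF X \<open>k < 4\<close>] qlead_below[OF Y l] by blast
  ultimately show ?thesis
    using product_term_below[OF \<open>k < 4\<close> l qlead_le[OF X \<open>k < 4\<close>] qlead_le[OF Y l]] by simp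
qed

lemma qlead_mult:
  assumes X: "qlead x D c" and Y: "qlead y E e"
  shows "qlead (x * y) (D + E) (struct_sign (deg_type D) (deg_type E) * c * e)"
proof (rule qlead_intro)
  let ?K = "deg_type D" and ?L = "deg_type E"
  fix m :: nat assume m: "m < 4"
  define T where "T k = struct_const k (prod_index k m) * qcomp x k * qcomp y (prod_index k m)" for k
  have expand: "qcomp (x * y) m = sum T {..<4}" using qcomp_mult[OF m] unfolding T_def by simp
  have below: "term_below m (D + E) (T k)" if "k < 4" "k \<noteq> ?K \<or> prod_index k m \<noteq> ?L" for k
    using qlead_mult_term_below[OF X Y that(1) m that(2)] unfolding T_def .
  show "term_leading m (D + E) (struct_sign ?K ?L * c * e) (qcomp (x * y) m)"
    if "m = deg_type (D + E)"
  proof -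
    have "m = prod_index ?K ?L" using that by (simp add: deg_type_add)
    then have KL: "prod_index ?K m = ?L" using prod_index_cancel deg_type_lt by simp
    have "term_leading m (D + E) (struct_sign ?K ?L * c * e) (T ?K)"
      using product_term_leading[OF deg_type_lt deg_type_lt, of "qcomp x ?K" "qcomp y ?L"]
        qlead_leading[OF X] qlead_leading[OF Y] \<open>m = prod_index ?K ?L\<close> KL
      unfolding T_def term_leading_def by simp
    then show ?thesis
      using term_leading_sum[of "{..<4}" ?K] below deg_type_lt expand by simp
  qed
  show "term_below m (D + E) (qcomp (x * y) m)" if "m \<noteq> deg_type (D + E)"
  proof -
    have "prod_index ?K ?L \<noteq> m" using that by (simp add: deg_type_add)
    moreover have "prod_index ?K (prod_index ?K m) = m" using prod_index_cancel[OF deg_type_lt m] .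
    ultimately have "k \<noteq> ?K \<or> prod_index k m \<noteq> ?L" for k by auto
    then show ?thesis using term_below_sum[of "{..<4::nat}"] below expand by simp
  qed
qed

section \<open>Two hermitian cones on D\<close>

text \<open>A nonzero symmetric quaternion has no ij-component, so its leading term is of type
  1, i or j.
  The sign is +1 for type 1; (-1)^m for type i, m the b-degree of the i-coefficient; and
  s (-1)^n for type j, n the a-degree of the b-leading coefficient of the j-coefficient.  The
  parameter s decides whether j or -j is positive, and is invisible on K = F(i).\<close>

definition cone_sign :: "real \<Rightarrow> int \<times> int \<Rightarrow> real" where
  "cone_sign s D = (if deg_type D = 1 then (if fst D mod 4 = 0 then 1 else -1)
     else if deg_type D = 2 then s * (if snd D mod 4 = 0 then 1 else -1) else 1)"

definition herm_cone :: "real \<Rightarrow> quat set" where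
  "herm_cone s = {x. qstar x = x \<and> (x = 0 \<or> (\<exists>D c. qlead x D c \<and> 0 < c * cone_sign s D))}"

lemma qstar_mult: "qstar (x * y) = qstar y * qstar x"
  by (simp add: qstar_def times_quat_def algebra_simps)

lemma qstar_qstar [simp]: "qstar (qstar x) = x"
  by (simp add: qstar_def)

lemma qstar_add: "qstar (x + y) = qstar x + qstar y"
  by (simp add: qstar_def plus_quat_def)

lemma symmetric_qcomp3: "qstar x = x \<Longrightarrow> qcomp x 3 = 0"
  using F_neg_self[of "q3 x"] by (cases x) (simp add: qstar_def qcomp_def)

lemma qlead_symmetric_type: "qlead x D c \<Longrightarrow> qstar x = x \<Longrightarrow> deg_type D \<noteq> 3"
  using qlead_leading symmetric_qcomp3 unfolding term_leading_def by metis

text \<open>Sign bookkeeping for a x a*: if a has leading degree d, the leading degree moves from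
  D to d + D + d and the leading coefficient picks up the structure signs of the two products
  and of the involution (besides a positive square).  cone_sign compensates exactly.\<close>

lemma cone_sign_conj:
  assumes "deg_type D \<noteq> 3"
  shows "cone_sign s (d + D + d) *
    (struct_sign (prod_index (deg_type d) (deg_type D)) (deg_type d) *
     struct_sign (deg_type d) (deg_type D) * (if deg_type d = 3 then -1 else 1)) = cone_sign s D"
proof -
  obtain p1 p2 d1 d2 where d: "d = (p1, p2)" and D: "D = (d1, d2)" by (cases d, cases D)
  have shift: "even e \<Longrightarrow> (e + 2 * p) mod 4 = 0 \<longleftrightarrow> (if odd p then e mod 4 \<noteq> 0 else e mod 4 = 0)"
    for e p :: int by presburger
  have "odd (d1 + 2 * p1) = odd d1" "odd (d2 + 2 * p2) = odd d2" by presburger+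
  moreover have shifted: "d + D + d = (d1 + 2 * p1, d2 + 2 * p2)" using d D by simp
  ultimately have type: "deg_type (d + D + d) = deg_type D" using D by (simp add: deg_type_def)
  have sign_shifted: "cone_sign s (d + D + d) =
      (if deg_type D = 1 then (if (d1 + 2 * p1) mod 4 = 0 then 1 else -1)
       else if deg_type D = 2 then s * (if (d2 + 2 * p2) mod 4 = 0 then 1 else -1) else 1)"
    unfolding cone_sign_def type unfolding shifted by simp
  have sign: "cone_sign s D =
      (if deg_type D = 1 then (if d1 mod 4 = 0 then 1 else -1)
       else if deg_type D = 2 then s * (if d2 mod 4 = 0 then 1 else -1) else 1)"
    unfolding cone_sign_def using D by simp
  have type_d: "deg_type d = (if odd p1 then 2 else 0) + (if odd p2 then 1 else 0)"
    and type_D: "deg_type D = (if odd d1 then 2 else 0) + (if odd d2 then 1 else 0)"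
    using d D by (simp_all add: deg_type_def)
  show ?thesis
    unfolding sign_shifted sign type_d type_D using assms[unfolded type_D] shift[of d1 p1] shift[of d2 p2]
    by (cases "odd p1"; cases "odd p2"; cases "odd d1"; cases "odd d2";
        simp add: prod_index_def struct_sign_def)
qed

text \<open>A nonzero x and -x have leading coefficients of opposite signs at the same degree.\<close>

lemma herm_cone_pointed:
  assumes "x \<in> herm_cone s" "- x \<in> herm_cone s" shows "x = 0"
proof (rule ccontr)
  assume "x \<noteq> 0"
  then obtain D c E e where X: "qlead x D c" "0 < c * cone_sign s D"
    and Y: "qlead (- x) E e" "0 < e * cone_sign s E"
    using assms unfolding herm_cone_def by auto
  have "E = D \<and> e = - c" using qlead_unique[OF Y(1) qlead_uminus[OF X(1)]] .
  then show False using X Y by simp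
qed

lemma herm_cone_add:
  assumes "x \<in> herm_cone s" "y \<in> herm_cone s" shows "x + y \<in> herm_cone s"
proof (cases "x = 0 \<or> y = 0")
  case False
  have sym: "qstar (x + y) = x + y" using assms unfolding herm_cone_def by (simp add: qstar_add)
  obtain D c E e where X: "qlead x D c" "0 < c * cone_sign s D"
    and Y: "qlead y E e" "0 < e * cone_sign s E"
    using assms False unfolding herm_cone_def by auto
  consider "lex_less D E" | "D = E" | "lex_less E D" using lex_trichotomy by blast
  then have "\<exists>D c. qlead (x + y) D c \<and> 0 < c * cone_sign s D"
  proof cases
    case 1 then show ?thesis using qlead_add_dominant[OF X(1) Y(1)] Y by blast
  next
    case 3 then show ?thesis using qlead_add_dominant[OF Y(1) X(1)] X by (metis add.commute)
  next
    case 2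
    then have pos: "0 < (c + e) * cone_sign s D" using X Y by (simp add: distrib_right)
    then have "c + e \<noteq> 0" by auto
    then show ?thesis using qlead_add_same[OF X(1) Y(1)[folded 2]] pos by blast
  qed
  then show ?thesis using sym unfolding herm_cone_def by auto
qed (use assms in auto)

text \<open>Closure under congruence: the leading coefficient of a x a* is G r^2 c, where r is the
  leading coefficient of a, and cone_sign_conj absorbs the sign G.\<close>

lemma herm_cone_conj:
  assumes "x \<in> herm_cone s" shows "a * x * qstar a \<in> herm_cone s"
proof (cases "a = 0 \<or> x = 0")
  case False
  have "qstar x = x" using assms unfolding herm_cone_def by auto
  then have sym: "qstar (a * x * qstar a) = a * x * qstar a" by (simp add: qstar_mult mult.assoc)
  obtain D c where X: "qlead x D c" "0 < c * cone_sign s D" using assms False unfolding herm_cone_def by auto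
  obtain d r where A: "qlead a d r" using qlead_exists False by blast
  define G where "G = struct_sign (prod_index (deg_type d) (deg_type D)) (deg_type d) *
    struct_sign (deg_type d) (deg_type D) * (if deg_type d = 3 then -1 else (1::real))"
  have coeff: "struct_sign (deg_type (d + D)) (deg_type d) * (struct_sign (deg_type d) (deg_type D) * r * c) *
      (if deg_type d = 3 then - r else r) = G * (r * r) * c"
    unfolding G_def deg_type_add by (cases "deg_type d = 3") (simp_all add: mult_ac)
  have "qlead (a * x * qstar a) (d + D + d) (G * (r * r) * c)"
    using qlead_mult[OF qlead_mult[OF A X(1)] qlead_qstar[OF A]] unfolding coeff .
  moreover have "cone_sign s (d + D + d) * G = cone_sign s D"
    unfolding G_def using cone_sign_conj[OF qlead_symmetric_type[OF X(1) \<open>qstar x = x\<close>]] .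
  then have "G * (r * r) * c * cone_sign s (d + D + d) = (r * r) * (c * cone_sign s D)"
    by (simp add: mult_ac)
  moreover have "0 < r * r" using qlead_coeff_nonzero[OF A] not_real_square_gt_zero by blast
  ultimately have "\<exists>D c. qlead (a * x * qstar a) D c \<and> 0 < c * cone_sign s D"
    using X(2) by (metis mult_pos_pos)
  then show ?thesis using sym unfolding herm_cone_def by simp
qed (use assms in \<open>auto simp: herm_cone_def qstar_mult\<close>)

lemma qlead_one: "qlead 1 (0, 0) 1"
  by (rule qlead_intro)
     (auto simp: term_leading_def term_below_def deg_type_def qcomp_def one_quat_def
        term_deg_def basis_deg_def)

lemma qlead_qj: "qlead qj (1, 0) 1"
  by (rule qlead_intro)
     (auto simp: term_leading_def term_below_def deg_type_def qcomp_def qj_def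
        term_deg_def basis_deg_def)

theorem herm_cone_unital_hermitian: "uhc_D (herm_cone s)"
  unfolding unital_hermitian_cone_def
proof (intro conjI ballI)
  show "herm_cone s \<subseteq> {r \<in> UNIV. qstar r = r}" unfolding herm_cone_def by auto
  have "cone_sign s (0, 0) = 1" by (simp add: cone_sign_def deg_type_def)
  then show "1 \<in> herm_cone s" using qlead_one unfolding herm_cone_def by (force simp: qstar_def one_quat_def)
  show "x + y \<in> herm_cone s" if "x \<in> herm_cone s" "y \<in> herm_cone s" for x y using herm_cone_add that .
  show "a * x * qstar a \<in> herm_cone s" if "x \<in> herm_cone s" for a x using herm_cone_conj that .
  have "0 \<in> herm_cone s" unfolding herm_cone_def by (simp add: qstar_def zero_quat_def)
  then show "herm_cone s \<inter> uminus ` herm_cone s = {0}"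
    using herm_cone_pointed[of _ s] by (auto intro: image_eqI[of 0 _ 0])
qed

lemma qj_in_herm_cone: "qj \<in> herm_cone 1" and minus_qj_in_herm_cone: "- qj \<in> herm_cone (-1)"
proof -
  have sym: "qstar qj = qj" "qstar (- qj) = - qj" by (simp_all add: qstar_def qj_def uminus_quat_def)
  have "cone_sign 1 (1, 0) = 1" "cone_sign (-1) (1, 0) = -1"
    by (simp_all add: cone_sign_def deg_type_def)
  then show "qj \<in> herm_cone 1" "- qj \<in> herm_cone (-1)"
    using qlead_qj qlead_uminus[OF qlead_qj] sym unfolding herm_cone_def by force+
qed

text \<open>Elements of K have no j-component, so their leading term never has type j and the
  sign condition does not depend on s.\<close>

lemma herm_cones_agree_on_K: "herm_cone 1 \<inter> Kset = herm_cone (-1) \<inter> Kset"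
proof -
  have same_sign: "cone_sign 1 D = cone_sign (-1) D" if "qlead x D c" "x \<in> Kset" for x D c
  proof -
    have "qcomp x 2 = 0" using that(2) by (simp add: Kset_def qcomp_def)
    then have "deg_type D \<noteq> 2" using qlead_leading[OF that(1)] unfolding term_leading_def by metis
    then show ?thesis by (simp add: cone_sign_def)
  qed
  have "(\<exists>D c. qlead x D c \<and> 0 < c * cone_sign 1 D) \<longleftrightarrow>
      (\<exists>D c. qlead x D c \<and> 0 < c * cone_sign (-1) D)" if "x \<in> Kset" for x
    using same_sign[OF _ that] by metis
  then show ?thesis unfolding herm_cone_def by auto
qed

section \<open>No hermitian cone on (M_2(K), #) contains lambda(j) or -lambda(j)\<close>

text \<open>In any unital hermitian cone, an element x that is sent to -x by a congruence
  x \<mapsto> p x p* cannot lie in the cone: otherwise -x would lie in it too.\<close>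

lemma cone_excludes_anti_congruent:
  assumes cone: "unital_hermitian_cone R add mul star one zero neg M"
    and "p \<in> R" "mul (mul p x) (star p) = neg x" "neg (neg x) = x" "x \<noteq> zero"
  shows "x \<notin> M"
proof
  assume "x \<in> M"
  then have "neg x \<in> M" using cone assms(2,3) unfolding unital_hermitian_cone_def by metis
  then have "x \<in> neg ` M" using assms(4) by (metis image_eqI)
  then have "x \<in> M \<inter> neg ` M" using \<open>x \<in> M\<close> by blast
  then show False using cone assms(5) unfolding unital_hermitian_cone_def by blast
qed

lemma mat2_eq_iff:
  "(X :: 'a^2^2) = Y \<longleftrightarrow> X$1$1 = Y$1$1 \<and> X$1$2 = Y$1$2 \<and> X$2$1 = Y$2$1 \<and> X$2$2 = Y$2$2"
  by (auto simp: vec_eq_iff forall_2)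

lemma mat2_mult_entry: "((X :: 'a::semiring_1^2^2) ** Y)$i$j = X$i$1 * Y$1$j + X$i$2 * Y$2$j"
  by (simp add: matrix_matrix_mult_def sum_2)

lemma ofF_mult: "ofF f * ofF g = ofF (f * g)"
  by (simp add: ofF_def times_quat_def)

lemma ofF_1: "ofF 1 = 1"
  by (simp add: ofF_def one_quat_def)

definition Amat_inv :: "quat^2^2" where
  "Amat_inv = (\<chi> s t. if s = t then (if s = 1 then 1 else ofF (inverse vb)) else 0)"

lemma matrix_inv_Amat: "matrix_inv Amat = Amat_inv"
proof -
  have inv: "Amat ** Amat_inv = mat 1" "Amat_inv ** Amat = mat 1"
    by (simp_all add: mat2_eq_iff mat2_mult_entry Amat_def Amat_inv_def mat_def ofF_mult ofF_1)
  define B where "B = matrix_inv Amat"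
  have "B ** Amat = mat 1"
    unfolding B_def matrix_inv_def using someI_ex[of "\<lambda>B. Amat ** B = mat 1 \<and> B ** Amat = mat 1"] inv
    by blast
  have "B = B ** (Amat ** Amat_inv)" using inv by simp
  also have "\<dots> = (B ** Amat) ** Amat_inv" by (simp add: matrix_mul_assoc)
  also have "\<dots> = Amat_inv" using \<open>B ** Amat = mat 1\<close> by simp
  finally show ?thesis unfolding B_def .
qed

text \<open>lambda(j) = [[0, b], [1, 0]], since j * 1 = j and j * j = b.\<close>

definition jmat :: "quat^2^2" where
  "jmat = (\<chi> s t. if s = 1 \<and> t = 2 then ofF vb else if s = 2 \<and> t = 1 then 1 else 0)"

text \<open>The matrix diag(1, -1) is #-symmetric and anticommutes with lambda(j).\<close>

definition sign_mat :: "quat^2^2" where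
  "sign_mat = (\<chi> s t. if s = t then (if s = 1 then 1 else -1) else 0)"

lemma msharp_sign_mat: "msharp sign_mat = sign_mat"
  unfolding msharp_def matrix_inv_Amat
  by (simp add: mat2_eq_iff mat2_mult_entry Amat_def Amat_inv_def sign_mat_def mstar_def qstar_def
      one_quat_def zero_quat_def uminus_quat_def times_quat_def plus_quat_def ofF_def)

lemma sign_mat_in_M2K: "sign_mat \<in> M2K"
  unfolding M2K_def sign_mat_def Kset_def by (auto simp: one_quat_def zero_quat_def uminus_quat_def)

lemma jmat_in_M2K: "jmat \<in> M2K" "- jmat \<in> M2K"
  unfolding M2K_def jmat_def Kset_def by (auto simp: ofF_def one_quat_def zero_quat_def uminus_quat_def)

lemma sign_mat_congruence: "sign_mat ** X ** msharp sign_mat = - X" if "X = jmat \<or> X = - jmat"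
  using that unfolding msharp_sign_mat by (auto simp: mat2_eq_iff mat2_mult_entry jmat_def sign_mat_def)

lemma jmat_nonzero: "jmat \<noteq> 0"
  by (simp add: mat2_eq_iff jmat_def one_quat_def zero_quat_def)

theorem no_M2K_cone_contains_jmat:
  assumes "uhc_M2K L" shows "jmat \<notin> L" "- jmat \<notin> L"
  using cone_excludes_anti_congruent[OF assms sign_mat_in_M2K] sign_mat_congruence jmat_nonzero
  by auto

text \<open>The coefficients of lambda(d) are uniquely determined, because 1, j is a basis of D
  as a right K-vector space.\<close>

lemma K_basis_unique:
  assumes "u \<in> Kset" "u' \<in> Kset" "w \<in> Kset" "w' \<in> Kset" "u + qj * w = u' + qj * w'"
  shows "u = u' \<and> w = w'"
proof -
  have "q0 (u + qj * w) = q0 (u' + qj * w')" "q1 (u + qj * w) = q1 (u' + qj * w')"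
       "q2 (u + qj * w) = q2 (u' + qj * w')" "q3 (u + qj * w) = q3 (u' + qj * w')"
    using assms(5) by simp_all
  then show ?thesis using assms(1-4)
    by (cases u; cases u'; cases w; cases w') (simp add: Kset_def plus_quat_def times_quat_def qj_def)
qed

lemma sum_ebas: "(\<Sum>s\<in>UNIV. ebas s * X$s$t) = X$1$t + qj * X$2$t"
  by (simp add: sum_2 ebas_def)

lemma lreg_eqI:
  assumes X: "X \<in> M2K" and e: "\<forall>t. d * ebas t = (\<Sum>s\<in>UNIV. ebas s * X$s$t)"
  shows "lreg d = X"
  unfolding lreg_def
proof (rule the_equality)
  show "X \<in> M2K \<and> (\<forall>t. d * ebas t = (\<Sum>s\<in>UNIV. ebas s * X$s$t))" using X e by blast
  fix Y assume Y: "Y \<in> M2K \<and> (\<forall>t. d * ebas t = (\<Sum>s\<in>UNIV. ebas s * Y$s$t))"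
  have "Y$1$t = X$1$t \<and> Y$2$t = X$2$t" for t
  proof (rule K_basis_unique)
    show "Y$1$t + qj * Y$2$t = X$1$t + qj * X$2$t" using Y e unfolding sum_ebas by metis
  qed (use X Y in \<open>auto simp: M2K_def\<close>)
  then show "Y = X" by (simp add: mat2_eq_iff)
qed

lemma qj_mult_qj: "qj * qj = ofF vb"
  by (simp add: qj_def ofF_def times_quat_def)

lemma ebas_1_2: "ebas 1 = 1" "ebas 2 = qj"
  by (simp_all add: ebas_def)

lemma lreg_qj: "lreg qj = jmat" "lreg (- qj) = - jmat"
proof -
  show "lreg qj = jmat"
    by (rule lreg_eqI[OF jmat_in_M2K(1)])
       (unfold forall_2 sum_ebas, simp add: jmat_def ebas_1_2 qj_mult_qj)
  show "lreg (- qj) = - jmat"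
    by (rule lreg_eqI[OF jmat_in_M2K(2)])
       (unfold forall_2 sum_ebas, simp add: jmat_def ebas_1_2 qj_mult_qj)
qed

text \<open>The main theorem: herm_cone 1 and herm_cone (-1) are the required cones.  They differ
  because j lies in the first and -j in the second, while a cone cannot contain both.\<close>

theorem mainTheorem17:
  shows "\<exists>M1 M2. uhc_D M1 \<and> uhc_D M2 \<and> M1 \<noteq> M2 \<and> qj \<in> M1 \<and> - qj \<in> M2 \<and>
            M1 \<inter> Kset = M2 \<inter> Kset \<and>
            \<not> (\<exists>L. uhc_M2K L \<and> (lreg qj \<in> L \<or> - lreg qj \<in> L)) \<and>
            (\<forall>M \<in> {M1, M2}. \<not> (\<exists>L. uhc_M2K L \<and> M \<subseteq> lreg -` L))"
proof (intro exI conjI)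
  show "uhc_D (herm_cone 1)" "uhc_D (herm_cone (-1))" by (rule herm_cone_unital_hermitian)+
  show j_pos: "qj \<in> herm_cone 1" and minus_j_pos: "- qj \<in> herm_cone (-1)"
    by (rule qj_in_herm_cone, rule minus_qj_in_herm_cone)
  show "herm_cone 1 \<inter> Kset = herm_cone (-1) \<inter> Kset" by (rule herm_cones_agree_on_K)
  show "herm_cone 1 \<noteq> herm_cone (-1)"
  proof
    assume "herm_cone 1 = herm_cone (-1)"
    then have "qj = 0" using herm_cone_pointed j_pos minus_j_pos by metis
    then show False by (simp add: qj_def zero_quat_def)
  qed
  show "\<not> (\<exists>L. uhc_M2K L \<and> (lreg qj \<in> L \<or> - lreg qj \<in> L))"
    using no_M2K_cone_contains_jmat lreg_qj by auto
  show "\<forall>M \<in> {herm_cone 1, herm_cone (-1)}. \<not> (\<exists>L. uhc_M2K L \<and> M \<subseteq> lreg -` L)"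
  proof (intro ballI notI, elim exE conjE)
    fix M L assume "M \<in> {herm_cone 1, herm_cone (-1)}" "uhc_M2K L" "M \<subseteq> lreg -` L"
    then have "lreg qj \<in> L \<or> lreg (- qj) \<in> L" using j_pos minus_j_pos by auto
    then show False using no_M2K_cone_contains_jmat[OF \<open>uhc_M2K L\<close>] lreg_qj by auto
  qed
qed

end
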